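(* Let $\bullet\in\{0,L_p,L,1_p,1\}$ and let $\mathsf{S}$ be a $\bullet$-continuous kinematic system. Let $\mathbf{x}_0\in X\setminus\mathrm{int}(\mathcal{G}^\bullet_\mathsf{S})$. If $\mathbf{J}\in C^1_{\mathbf{x}_0}(X,\mathbb{R}^{m\times n})$ and $\mathsf{D}\mathbf{J}\in C^{L_p}_{\mathbf{x}_0}$, then there exist $a\in\{1,\dots,m\}$ and $r,L\in(0,\infty)$ such that (i) $c_{aa}(\mathbf{x}_0)=0$; (ii) $c_{aa}\hat{\mathbf{j}}_a^T\in C^{1_p}_{\mathbf{x}_0+rB_X}(X,\mathbb{R}^n)$; (iii) $\|\mathbf{h}(\mathbf{x})\|\le L\|\mathbf{x}-\mathbf{x}_0\|^2$ for all $\mathbf{x}\in\mathbf{x}_0+rB_X$, where $\mathbf{h}(\mathbf{x})=(c_{aa}\hat{\mathbf{j}}_a^T)(\mathbf{x})-\mathsf{D}(c_{aa}\hat{\mathbf{j}}_a^T)(\mathbf{x}_0)(\mathbf{x}-\mathbf{x}_0)$.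
   Context: Kinematic system: $l\ge2$, $m_1,\dots,m_l\ge1$, $m=\sum m_a\le n$; $X=\mathbb{R}\times\mathbb{R}^n$, $B_X$ its closed unit ball; $\mathbf{F}=[\mathbf{f}_t\ \mathbf{F}_q]:X\to\mathbb{R}^{m\times(n+1)}$, $\mathbf{R}:X\to$ invertible $n\times n$ matrices, $\mathbf{r}:X\to\mathbb{R}^m$; it is $\bullet$-continuous if $\mathbf{F},\mathbf{R},\mathbf{r}\in C^\bullet$ on $X$. $\mathbf{J}=\mathbf{F}_q\mathbf{R}^{-1}$. Orthogonalization: pointwise Gram–Schmidt on rows $\mathbf{j}_i$ of $\mathbf{J}$: $\mathbf{v}_i=\mathbf{j}_i-\sum_{k<i,c_{kk}>0}\langle\hat{\mathbf{j}}_k,\mathbf{j}_i\rangle\hat{\mathbf{j}}_k$, $c_{ii}=\|\mathbf{v}_i\|$, $\hat{\mathbf{j}}_i=\mathbf{v}_i/c_{ii}$ if $c_{ii}>0$, $c_{ik}=\langle\hat{\mathbf{j}}_k,\mathbf{j}_i\rangle$ for $k<i$ with $c_{kk}>0$, else $c_{ik}=0$; the other rows complete an orthonormal basis of the null space of $\mathbf{J}$ (note $c_{ii}\hat{\mathbf{j}}_i=\mathbf{v}_i$ regardless of these choices). $\mathbf{C}=[c_{ik}]_{i,k\le m}$, with diagonal blocks $\mathbf{C}_{aa}\in\mathbb{R}^{m_a\times m_a}$ (task blocks of sizes $m_1,\dots,m_l$), and $\hat{\mathbf{J}}_a$ the rows of $\hat{\mathbf{J}}_e$ with indices in the $a$-th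 task block. $\mathcal{G}^\bullet_\mathsf{S}=\{\mathbf{x}\in X:\mathbf{C}_{aa}\hat{\mathbf{J}}_a\in C^\bullet_\mathbf{x}\ \forall a\}$. Regularity classes: $f\in C^\bullet_{x_0}$ means ($0$) continuous at $x_0$; ($L_p$) $\exists r>0,L\ge0$: $\|f(x)-f(x_0)\|\le L\|x-x_0\|$ for $\|x-x_0\|\le r$; ($L$) Lipschitz near $x_0$; ($1_p$) Fréchet differentiable at $x_0$; ($1$) differentiable near $x_0$ with derivative continuous at $x_0$; $C^\bullet_\Omega$ = $\bullet$-continuous at every point of $\Omega$. $\mathsf{D}$ denotes the derivative. *)

theory Defs
  imports "HOL-Analysis.Analysis"
begin

datatype regclass = Reg0 | RegLp | RegL | Reg1p | Reg1

definition Dop :: "('a::real_normed_vector \<Rightarrow> 'b::real_normed_vector) \<Rightarrow> 'a \<Rightarrow> ('a \<Rightarrow>\<^sub>L 'b)" where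
  "Dop f x = Blinfun (frechet_derivative f (at x))"

fun reg_at :: "regclass \<Rightarrow> ('a::real_normed_vector \<Rightarrow> 'b::real_normed_vector) \<Rightarrow> 'a \<Rightarrow> bool" where
  "reg_at Reg0 f x0 = isCont f x0"
| "reg_at RegLp f x0 = (\<exists>r>0. \<exists>L\<ge>0. \<forall>x. norm (x - x0) \<le> r \<longrightarrow> norm (f x - f x0) \<le> L * norm (x - x0))"
| "reg_at RegL f x0 = (\<exists>r>0. \<exists>L. L-lipschitz_on (cball x0 r) f)"
| "reg_at Reg1p f x0 = (f differentiable (at x0))"
| "reg_at Reg1 f x0 = ((\<exists>r>0. \<forall>x\<in>ball x0 r. f differentiable (at x)) \<and> isCont (Dop f) x0)"

definition reg_on :: "regclass \<Rightarrow> ('a::real_normed_vector \<Rightarrow> 'b::real_normed_vector) \<Rightarrow> 'a set \<Rightarrow> bool" where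
  "reg_on b f S = (\<forall>x\<in>S. reg_at b f x)"

text \<open>X = R x R^n is the type real x real^n. Rows of m x (n+1) / m x n matrices
  are indexed by a finite linearly ordered type 'm (m = card of 'm); the order gives the row order.\<close>

type_synonym 'n state = "real \<times> (real^'n)"

definition kinematic_system ::
  "nat list \<Rightarrow> (('n::finite) state \<Rightarrow> ('n state)^('m::{finite,linorder})) \<Rightarrow> ('n state \<Rightarrow> real^'n^'n)
    \<Rightarrow> ('n state \<Rightarrow> real^('m::{finite,linorder})) \<Rightarrow> bool" where
  "kinematic_system ms F R r \<longleftrightarrow> length ms \<ge> 2 \<and> (\<forall>k\<in>set ms. k \<ge> 1) \<and>
     sum_list ms = CARD('m::{finite,linorder}) \<and> CARD('m::{finite,linorder}) \<le> CARD('n::finite) \<and> (\<forall>x. invertible (R x))"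

definition reg_system :: "regclass \<Rightarrow> (('n::finite) state \<Rightarrow> ('n state)^('m::{finite,linorder}))
    \<Rightarrow> ('n state \<Rightarrow> real^'n^'n) \<Rightarrow> ('n state \<Rightarrow> real^('m::{finite,linorder})) \<Rightarrow> bool" where
  "reg_system b F R r \<longleftrightarrow> reg_on b F UNIV \<and> reg_on b R UNIV \<and> reg_on b r UNIV"

text \<open>F_q: the last n columns of F; J = F_q R^{-1}.\<close>
definition Fq :: "(('n::finite) state)^('m::{finite,linorder}) \<Rightarrow> real^'n^('m::{finite,linorder})" where
  "Fq M = (\<chi> i. snd (M $ i))"

definition Jmat :: "(('n::finite) state \<Rightarrow> ('n state)^('m::{finite,linorder})) \<Rightarrow> ('n state \<Rightarrow> real^'n^'n) \<Rightarrow> 'n state \<Rightarrow> real^'n^('m::{finite,linorder})" where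
  "Jmat F R x = Fq (F x) ** matrix_inv (R x)"

text \<open>Processing the rows left to right; each step appends hat j_i = v_i / c_ii if c_ii > 0,
  and 0 otherwise (placeholder for the null-space completion, which never enters C_aa hat J_a).\<close>
definition gs_hats :: "('a::real_inner) list \<Rightarrow> 'a list" where
  "gs_hats js = foldl (\<lambda>hs j. hs @
     [let v = j - (\<Sum>h\<leftarrow>filter (\<lambda>h. h \<noteq> 0) hs. (h \<bullet> j) *\<^sub>R h)
      in if norm v > 0 then (1 / norm v) *\<^sub>R v else 0]) [] js"

definition row_pos :: "'m::{finite,linorder} \<Rightarrow> nat" where
  "row_pos i = card {k. k < i}"

definition rows :: "real^'n^('m::{finite,linorder}) \<Rightarrow> (real^'n) list" where
  "rows M = map (\<lambda>i. M $ i) (sorted_list_of_set (UNIV :: 'm::{finite,linorder} set))"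

definition gs_hat :: "real^'n^('m::{finite,linorder}) \<Rightarrow> 'm::{finite,linorder} \<Rightarrow> real^'n" where
  "gs_hat M i = gs_hats (rows M) ! row_pos i"

definition gs_v :: "real^'n^('m::{finite,linorder}) \<Rightarrow> 'm::{finite,linorder} \<Rightarrow> real^'n" where
  "gs_v M i = M $ i - (\<Sum>k\<in>{k. k < i \<and> gs_hat M k \<noteq> 0}. (gs_hat M k \<bullet> M $ i) *\<^sub>R gs_hat M k)"

definition gs_c :: "real^'n^('m::{finite,linorder}) \<Rightarrow> 'm::{finite,linorder} \<Rightarrow> 'm \<Rightarrow> real" where
  "gs_c M i k = (if k = i then norm (gs_v M i)
                 else if k < i \<and> norm (gs_v M k) > 0 then gs_hat M k \<bullet> M $ i else 0)"

text \<open>Block a (0-based, a < length ms) consists of rows with positions in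
  [m_1+...+m_a, m_1+...+m_{a+1}).\<close>
definition task_block :: "nat list \<Rightarrow> nat \<Rightarrow> 'm::{finite,linorder} set" where
  "task_block ms a = {i. sum_list (take a ms) \<le> row_pos i \<and> row_pos i < sum_list (take (Suc a) ms)}"

text \<open>C_aa hat J_a, embedded as an m x n matrix whose rows outside block a are zero.\<close>
definition block_mat :: "nat list \<Rightarrow> real^'n^('m::{finite,linorder}) \<Rightarrow> nat \<Rightarrow> real^'n^('m::{finite,linorder})" where
  "block_mat ms M a = (\<chi> i. if i \<in> task_block ms a
       then (\<Sum>k\<in>task_block ms a. gs_c M i k *\<^sub>R gs_hat M k) else 0)"

definition G_set :: "regclass \<Rightarrow> nat list \<Rightarrow> (('n::finite) state \<Rightarrow> ('n state)^('m::{finite,linorder}))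
    \<Rightarrow> ('n state \<Rightarrow> real^'n^'n) \<Rightarrow> 'n state set" where
  "G_set b ms F R = {x. \<forall>a < length ms. reg_at b (\<lambda>y. block_mat ms (Jmat F R y) a) x}"

end

theory Submission
  imports Defs
begin

text \<open>
  If no Gram--Schmidt pivot \<open>v\<^sub>a = c\<^sub>a\<^sub>a\<close> times the \<open>a\<close>-th normalised row (the vector
  \<open>gs_v\<close>) vanished at \<open>J(x\<^sub>0)\<close>, Gram--Schmidt would be \<open>C\<^sup>1\<^sup>,\<^sup>1\<close> -- differentiable with
  locally Lipschitz derivative -- on a neighbourhood of \<open>J(x\<^sub>0)\<close>. Composition with a
  \<open>C\<^sup>1\<^sup>,\<^sup>1\<close> map preserves each regularity class, so every block \<open>C\<^sub>a\<^sub>a\<close>\<open>J\<^sub>a\<close> would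
  inherit the regularity of \<open>J\<close> near \<open>x\<^sub>0\<close>, and \<open>x\<^sub>0\<close> would lie in the interior of \<open>G\<close>.
  Hence some pivot vanishes at \<open>x\<^sub>0\<close>. For the first such \<open>a\<close>, \<open>v\<^sub>a\<close> only involves the
  normalisations of the earlier, nonvanishing pivots, so it is still \<open>C\<^sup>1\<^sup>,\<^sup>1\<close> near
  \<open>J(x\<^sub>0)\<close>. Then \<open>v\<^sub>a \<circ> J\<close> is differentiable near \<open>x\<^sub>0\<close> with derivative Lipschitz at
  \<open>x\<^sub>0\<close>, and since \<open>v\<^sub>a(J(x\<^sub>0)) = 0\<close> its linearisation at \<open>x\<^sub>0\<close> has quadratic error.
\<close>

section \<open>Locally Lipschitz maps\<close>

definition locally_lipschitz_on :: "'a::metric_space set \<Rightarrow> ('a \<Rightarrow> 'b::metric_space) \<Rightarrow> bool" where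
  "locally_lipschitz_on S f \<longleftrightarrow> (\<forall>x\<in>S. \<exists>r>0. \<exists>L. ball x r \<subseteq> S \<and> L-lipschitz_on (ball x r) f)"

lemma locally_lipschitz_onE:
  assumes "locally_lipschitz_on S f" "x \<in> S"
  obtains r L where "r > 0" "ball x r \<subseteq> S" "L-lipschitz_on (ball x r) f"
  using assms unfolding locally_lipschitz_on_def by blast

lemma locally_lipschitz_onI:
  assumes "\<And>x. x \<in> S \<Longrightarrow> \<exists>r>0. \<exists>L. ball x r \<subseteq> S \<and> L-lipschitz_on (ball x r) f"
  shows "locally_lipschitz_on S f"
  using assms unfolding locally_lipschitz_on_def by blast

lemma locally_lipschitz_on_imp_open: "locally_lipschitz_on S f \<Longrightarrow> open S"
  unfolding locally_lipschitz_on_def open_contains_ball by blast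

lemma locally_lipschitz_on_subset:
  assumes f: "locally_lipschitz_on S f" and "open T" "T \<subseteq> S"
  shows "locally_lipschitz_on T f"
proof (rule locally_lipschitz_onI)
  fix x assume "x \<in> T"
  then obtain e where e: "e > 0" "ball x e \<subseteq> T" using \<open>open T\<close> open_contains_ball by blast
  obtain r L where "r > 0" "L-lipschitz_on (ball x r) f"
    using f \<open>x \<in> T\<close> \<open>T \<subseteq> S\<close> by (blast elim: locally_lipschitz_onE)
  moreover have "L-lipschitz_on (ball x (min r e)) f"
    by (rule lipschitz_on_subset[OF \<open>L-lipschitz_on (ball x r) f\<close>]) auto
  ultimately show "\<exists>r>0. \<exists>L. ball x r \<subseteq> T \<and> L-lipschitz_on (ball x r) f"
    using e by (intro exI[of _ "min r e"]) auto
qed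

lemma lipschitz_on_norm_bound:
  assumes "L-lipschitz_on S f" "x \<in> S" "y \<in> S" "dist x y \<le> r"
  shows "norm (f y) \<le> norm (f x) + L * r"
proof -
  have "dist (f y) (f x) \<le> L * dist y x" by (rule lipschitz_onD[OF assms(1,3,2)])
  also have "\<dots> \<le> L * r"
    using assms(4) lipschitz_on_nonneg[OF assms(1)] by (simp add: dist_commute mult_left_mono)
  finally show ?thesis using norm_triangle_ineq2[of "f y" "f x"] by (simp add: dist_norm)
qed

lemma locally_lipschitz_on_imp_continuous_on:
  assumes "locally_lipschitz_on S f" shows "continuous_on S f"
proof (rule continuous_at_imp_continuous_on, rule ballI)
  fix x assume "x \<in> S"
  then obtain r L where "r > 0" "L-lipschitz_on (ball x r) f"
    using assms by (blast elim: locally_lipschitz_onE)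
  then have "continuous_on (ball x r) f" by (blast intro: lipschitz_on_continuous_on)
  then show "isCont f x" by (rule continuous_on_interior) (simp add: \<open>r > 0\<close>)
qed

lemma locally_lipschitz_on_const: "open S \<Longrightarrow> locally_lipschitz_on S (\<lambda>x. c)"
  unfolding locally_lipschitz_on_def open_contains_ball by (blast intro: lipschitz_on_constant)

lemma locally_lipschitz_on_bounded_linear:
  assumes "open S" "bounded_linear h"
  shows "locally_lipschitz_on S h"
proof (rule locally_lipschitz_onI)
  fix x assume "x \<in> S"
  then obtain e where "e > 0" "ball x e \<subseteq> S" using \<open>open S\<close> open_contains_ball by blast
  moreover obtain B where "B-lipschitz_on (ball x e) h"
    using bounded_linear.lipschitz_boundE[OF assms(2)] .
  ultimately show "\<exists>r>0. \<exists>L. ball x r \<subseteq> S \<and> L-lipschitz_on (ball x r) h" by blast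
qed

lemma locally_lipschitz_on_compose:
  assumes f: "locally_lipschitz_on T f" and g: "locally_lipschitz_on S g" and "g ` S \<subseteq> T"
  shows "locally_lipschitz_on S (\<lambda>x. f (g x))"
proof (rule locally_lipschitz_onI)
  fix x assume "x \<in> S"
  obtain r2 L2 where r2: "r2 > 0" "ball x r2 \<subseteq> S" "L2-lipschitz_on (ball x r2) g"
    using g \<open>x \<in> S\<close> by (rule locally_lipschitz_onE)
  obtain r1 L1 where r1: "r1 > 0" "L1-lipschitz_on (ball (g x) r1) f"
    using f \<open>x \<in> S\<close> \<open>g ` S \<subseteq> T\<close> by (blast elim: locally_lipschitz_onE)
  have "isCont g x"
    using locally_lipschitz_on_imp_continuous_on[OF g] \<open>x \<in> S\<close> locally_lipschitz_on_imp_open[OF g]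
    by (simp add: continuous_on_eq_continuous_at)
  then obtain d where d: "d > 0" "g ` ball x d \<subseteq> ball (g x) r1"
    using r1(1) continuous_at_ball by blast
  let ?r = "min r2 d"
  have "L2-lipschitz_on (ball x ?r) g" by (rule lipschitz_on_subset[OF r2(3)]) auto
  moreover have "L1-lipschitz_on (g ` ball x ?r) f"
    by (rule lipschitz_on_subset[OF r1(2)]) (use d(2) in auto)
  ultimately have "(L1 * L2)-lipschitz_on (ball x ?r) (\<lambda>x. f (g x))"
    by (rule lipschitz_on_compose2)
  then show "\<exists>r>0. \<exists>L. ball x r \<subseteq> S \<and> L-lipschitz_on (ball x r) (\<lambda>x. f (g x))"
    using r2 d by (intro exI[of _ ?r]) auto
qed

lemma locally_lipschitz_on_add:
  fixes f g :: "'a::metric_space \<Rightarrow> 'b::real_normed_vector"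
  assumes f: "locally_lipschitz_on S f" and g: "locally_lipschitz_on S g"
  shows "locally_lipschitz_on S (\<lambda>x. f x + g x)"
proof (rule locally_lipschitz_onI)
  fix x assume "x \<in> S"
  obtain r1 L1 where r1: "r1 > 0" "ball x r1 \<subseteq> S" "L1-lipschitz_on (ball x r1) f"
    using f \<open>x \<in> S\<close> by (rule locally_lipschitz_onE)
  obtain r2 L2 where r2: "r2 > 0" "L2-lipschitz_on (ball x r2) g"
    using g \<open>x \<in> S\<close> by (blast elim: locally_lipschitz_onE)
  have "(L1 + L2)-lipschitz_on (ball x (min r1 r2)) (\<lambda>x. f x + g x)"
    by (intro lipschitz_on_add lipschitz_on_subset[OF r1(3)] lipschitz_on_subset[OF r2(2)]) auto
  then show "\<exists>r>0. \<exists>L. ball x r \<subseteq> S \<and> L-lipschitz_on (ball x r) (\<lambda>x. f x + g x)"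
    using r1 r2 by (intro exI[of _ "min r1 r2"]) auto
qed

lemma (in bounded_bilinear) locally_lipschitz_on:
  assumes f: "locally_lipschitz_on S f" and g: "locally_lipschitz_on S g"
  shows "locally_lipschitz_on S (\<lambda>x. prod (f x) (g x))"
proof (rule locally_lipschitz_onI)
  fix x assume "x \<in> S"
  obtain r1 L1 where r1: "r1 > 0" "ball x r1 \<subseteq> S" "L1-lipschitz_on (ball x r1) f"
    using f \<open>x \<in> S\<close> by (rule locally_lipschitz_onE)
  obtain r2 L2 where r2: "r2 > 0" "L2-lipschitz_on (ball x r2) g"
    using g \<open>x \<in> S\<close> by (blast elim: locally_lipschitz_onE)
  obtain K where K: "K > 0" "\<And>a b. norm (prod a b) \<le> norm a * norm b * K"
    using pos_bounded by blast
  define r where "r = min r1 r2"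
  define Bf where "Bf = norm (f x) + L1 * r"
  define Bg where "Bg = norm (g x) + L2 * r"
  have L: "L1 \<ge> 0" "L2 \<ge> 0" using r1(3) r2(2) by (auto intro: lipschitz_on_nonneg)
  have f': "L1-lipschitz_on (ball x r) f" and g': "L2-lipschitz_on (ball x r) g"
    using r1(3) r2(2) by (auto simp: r_def intro: lipschitz_on_subset)
  have r: "r > 0" using r1 r2 by (simp add: r_def)
  have B: "Bf \<ge> 0" "Bg \<ge> 0" using L r unfolding Bf_def Bg_def by simp_all
  have bf: "norm (f y) \<le> Bf" and bg: "norm (g y) \<le> Bg" if "y \<in> ball x r" for y
    unfolding Bf_def Bg_def
    using that r by (auto intro!: lipschitz_on_norm_bound[OF f'] lipschitz_on_norm_bound[OF g'])
  have "(K * (L1 * Bg + Bf * L2))-lipschitz_on (ball x r) (\<lambda>x. prod (f x) (g x))"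
  proof (rule lipschitz_onI)
    fix y z assume y: "y \<in> ball x r" and z: "z \<in> ball x r"
    have "norm (prod (f y) (g y) - prod (f z) (g z))
        = norm (prod (f y - f z) (g y) + prod (f z) (g y - g z))"
      by (simp add: diff_left diff_right)
    also have "\<dots> \<le> norm (f y - f z) * norm (g y) * K + norm (f z) * norm (g y - g z) * K"
      by (intro order_trans[OF norm_triangle_ineq] add_mono K(2))
    also have "\<dots> \<le> (L1 * dist y z) * Bg * K + Bf * (L2 * dist y z) * K"
      using lipschitz_onD[OF f' y z] lipschitz_onD[OF g' y z] bf[OF z] bg[OF y] K(1) L B
      by (intro add_mono mult_right_mono mult_mono) (auto simp: dist_norm)
    finally show "dist (prod (f y) (g y)) (prod (f z) (g z)) \<le> K * (L1 * Bg + Bf * L2) * dist y z"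
      by (simp add: dist_norm algebra_simps)
  next
    show "0 \<le> K * (L1 * Bg + Bf * L2)" using K(1) L B by simp
  qed
  then show "\<exists>r>0. \<exists>L. ball x r \<subseteq> S \<and> L-lipschitz_on (ball x r) (\<lambda>x. prod (f x) (g x))"
    using r r1(2) by (intro exI[of _ r]) (auto simp: r_def)
qed

lemma locally_lipschitz_on_inverse: "locally_lipschitz_on {t::real. t \<noteq> 0} inverse"
proof (rule locally_lipschitz_onI)
  fix t :: real assume "t \<in> {t. t \<noteq> 0}"
  define r where "r = \<bar>t\<bar> / 2"
  have r: "r > 0" using \<open>t \<in> _\<close> by (simp add: r_def)
  have lb: "r \<le> \<bar>y\<bar>" if "y \<in> ball t r" for y
    using that unfolding r_def dist_real_def mem_ball by linarith
  have "(1 / (r * r))-lipschitz_on (ball t r) inverse"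
  proof (rule lipschitz_onI)
    fix y z assume y: "y \<in> ball t r" and z: "z \<in> ball t r"
    have "y \<noteq> 0" "z \<noteq> 0" using lb[OF y] lb[OF z] r by auto
    then have "dist (inverse y) (inverse z) = \<bar>z - y\<bar> / (\<bar>y\<bar> * \<bar>z\<bar>)"
      by (simp add: dist_real_def field_simps abs_divide abs_mult)
    also have "\<dots> \<le> \<bar>z - y\<bar> / (r * r)"
      using lb[OF y] lb[OF z] r by (intro divide_left_mono mult_mono) auto
    finally show "dist (inverse y) (inverse z) \<le> 1 / (r * r) * dist y z"
      by (simp add: dist_real_def abs_minus_commute)
  qed (use r in simp)
  moreover have "ball t r \<subseteq> {t. t \<noteq> 0}"
  proof
    fix y assume "y \<in> ball t r"
    then show "y \<in> {t. t \<noteq> 0}" using lb[of y] r by auto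
  qed
  ultimately show "\<exists>r>0. \<exists>L. ball t r \<subseteq> {t. t \<noteq> 0} \<and> L-lipschitz_on (ball t r) inverse"
    using r by blast
qed

lemma locally_lipschitz_on_norm:
  assumes "open S" shows "locally_lipschitz_on S norm"
proof -
  have "1-lipschitz_on U norm" for U
    by (rule lipschitz_onI) (auto simp: dist_norm norm_triangle_ineq3)
  then show ?thesis using assms unfolding locally_lipschitz_on_def open_contains_ball by blast
qed

section \<open>Maps with locally Lipschitz derivative\<close>

definition C11_on :: "'a::real_normed_vector set \<Rightarrow> ('a \<Rightarrow> 'b::real_normed_vector) \<Rightarrow> bool" where
  "C11_on S f \<longleftrightarrow>
     (\<exists>D. (\<forall>x\<in>S. (f has_derivative blinfun_apply (D x)) (at x)) \<and> locally_lipschitz_on S D)"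

lemma C11_onI:
  assumes "\<And>x. x \<in> S \<Longrightarrow> (f has_derivative blinfun_apply (D x)) (at x)" "locally_lipschitz_on S D"
  shows "C11_on S f"
  using assms unfolding C11_on_def by blast

lemma C11_on_imp_open: "C11_on S f \<Longrightarrow> open S"
  unfolding C11_on_def by (blast intro: locally_lipschitz_on_imp_open)

lemma C11_on_imp_locally_lipschitz_on:
  assumes "C11_on S f" shows "locally_lipschitz_on S f"
proof (rule locally_lipschitz_onI)
  fix x assume "x \<in> S"
  obtain D where D: "\<And>z. z \<in> S \<Longrightarrow> (f has_derivative blinfun_apply (D z)) (at z)"
    and D_lip: "locally_lipschitz_on S D"
    using assms unfolding C11_on_def by blast
  obtain r L where r: "r > 0" "ball x r \<subseteq> S" "L-lipschitz_on (ball x r) D"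
    using D_lip \<open>x \<in> S\<close> by (rule locally_lipschitz_onE)
  define B where "B = norm (D x) + L * r"
  have "B-lipschitz_on (ball x r) f"
  proof (rule lipschitz_onI)
    fix y z assume "y \<in> ball x r" "z \<in> ball x r"
    have "norm (f y - f z) \<le> B * norm (y - z)"
    proof (rule differentiable_bound[of "ball x r"])
      show "(f has_derivative blinfun_apply (D u)) (at u within ball x r)" if "u \<in> ball x r" for u
        using D r(2) that by (blast intro: has_derivative_at_withinI)
      show "onorm (blinfun_apply (D u)) \<le> B" if "u \<in> ball x r" for u
        using lipschitz_on_norm_bound[OF r(3), of x u r] that r(1)
        by (simp add: B_def norm_blinfun.rep_eq less_imp_le)
    qed (use \<open>y \<in> _\<close> \<open>z \<in> _\<close> in auto)
    then show "dist (f y) (f z) \<le> B * dist y z" by (simp add: dist_norm)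
  next
    show "0 \<le> B" using r lipschitz_on_nonneg[OF r(3)] by (simp add: B_def)
  qed
  then show "\<exists>r>0. \<exists>L. ball x r \<subseteq> S \<and> L-lipschitz_on (ball x r) f" using r by blast
qed

lemma C11_on_imp_continuous_on: "C11_on S f \<Longrightarrow> continuous_on S f"
  by (intro locally_lipschitz_on_imp_continuous_on C11_on_imp_locally_lipschitz_on)

lemma C11_on_cong:
  assumes f: "C11_on S f" and eq: "\<And>x. x \<in> S \<Longrightarrow> f x = g x"
  shows "C11_on S g"
proof -
  obtain D where D: "\<And>x. x \<in> S \<Longrightarrow> (f has_derivative blinfun_apply (D x)) (at x)"
    and "locally_lipschitz_on S D"
    using f unfolding C11_on_def by blast
  moreover have "open S" using f by (rule C11_on_imp_open)
  ultimately show ?thesis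
    by (intro C11_onI[of S g D]) (auto intro: has_derivative_transform_within_open eq)
qed

lemma C11_on_subset: "C11_on S f \<Longrightarrow> open T \<Longrightarrow> T \<subseteq> S \<Longrightarrow> C11_on T f"
  unfolding C11_on_def by (blast intro: locally_lipschitz_on_subset)

lemma C11_on_bounded_linear: "open S \<Longrightarrow> bounded_linear h \<Longrightarrow> C11_on S h"
  by (rule C11_onI[where D = "\<lambda>x. Blinfun h"])
    (auto simp: bounded_linear_Blinfun_apply bounded_linear_imp_has_derivative
      intro: locally_lipschitz_on_const)

lemma C11_on_const: "open S \<Longrightarrow> C11_on S (\<lambda>x. c)"
  by (rule C11_onI[where D = "\<lambda>x. 0"])
    (auto intro!: has_derivative_eq_rhs[OF has_derivative_const] locally_lipschitz_on_const
      simp: fun_eq_iff)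

lemma C11_on_id: "open S \<Longrightarrow> C11_on S (\<lambda>x. x)"
  by (rule C11_on_bounded_linear[OF _ bounded_linear_ident])

lemma C11_on_compose:
  assumes f: "C11_on T f" and g: "C11_on S g" and "g ` S \<subseteq> T"
  shows "C11_on S (\<lambda>x. f (g x))"
proof -
  obtain Df where Df: "\<And>y. y \<in> T \<Longrightarrow> (f has_derivative blinfun_apply (Df y)) (at y)"
    and "locally_lipschitz_on T Df"
    using f unfolding C11_on_def by blast
  obtain Dg where Dg: "\<And>x. x \<in> S \<Longrightarrow> (g has_derivative blinfun_apply (Dg x)) (at x)"
    and "locally_lipschitz_on S Dg"
    using g unfolding C11_on_def by blast
  show ?thesis
  proof (rule C11_onI[where D = "\<lambda>x. Df (g x) o\<^sub>L Dg x"])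
    show "((\<lambda>x. f (g x)) has_derivative blinfun_apply (Df (g x) o\<^sub>L Dg x)) (at x)" if "x \<in> S" for x
      using diff_chain_at[OF Dg[OF that] Df] that \<open>g ` S \<subseteq> T\<close>
      by (auto simp: o_def blinfun_compose.rep_eq)
    have "locally_lipschitz_on S (\<lambda>x. Df (g x))"
      by (rule locally_lipschitz_on_compose[OF \<open>locally_lipschitz_on T Df\<close>
            C11_on_imp_locally_lipschitz_on[OF g] \<open>g ` S \<subseteq> T\<close>])
    then show "locally_lipschitz_on S (\<lambda>x. Df (g x) o\<^sub>L Dg x)"
      using \<open>locally_lipschitz_on S Dg\<close>
      by (rule bounded_bilinear.locally_lipschitz_on[OF bounded_bilinear_blinfun_compose])
  qed
qed

lemma (in bounded_bilinear) C11_on: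
  assumes f: "C11_on S f" and g: "C11_on S g"
  shows "C11_on S (\<lambda>x. prod (f x) (g x))"
proof -
  obtain Df where Df: "\<And>x. x \<in> S \<Longrightarrow> (f has_derivative blinfun_apply (Df x)) (at x)"
    and "locally_lipschitz_on S Df"
    using f unfolding C11_on_def by blast
  obtain Dg where Dg: "\<And>x. x \<in> S \<Longrightarrow> (g has_derivative blinfun_apply (Dg x)) (at x)"
    and "locally_lipschitz_on S Dg"
    using g unfolding C11_on_def by blast
  have S: "open S" using f by (rule C11_on_imp_open)
  show ?thesis
  proof (rule C11_onI[where D = "\<lambda>x. (prod_right (f x) o\<^sub>L Dg x) + (prod_left (g x) o\<^sub>L Df x)"])
    show "((\<lambda>x. prod (f x) (g x)) has_derivative
        blinfun_apply ((prod_right (f x) o\<^sub>L Dg x) + (prod_left (g x) o\<^sub>L Df x))) (at x)"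
      if "x \<in> S" for x
      using FDERIV[OF Df[OF that] Dg[OF that]]
      by (simp add: plus_blinfun.rep_eq prod_right.rep_eq prod_left.rep_eq add.commute)
    have "locally_lipschitz_on S (\<lambda>x. prod_right (f x))"
      by (rule locally_lipschitz_on_compose[OF
            locally_lipschitz_on_bounded_linear[OF open_UNIV bounded_linear_prod_right]
            C11_on_imp_locally_lipschitz_on[OF f]]) simp
    moreover have "locally_lipschitz_on S (\<lambda>x. prod_left (g x))"
      by (rule locally_lipschitz_on_compose[OF
            locally_lipschitz_on_bounded_linear[OF open_UNIV bounded_linear_prod_left]
            C11_on_imp_locally_lipschitz_on[OF g]]) simp
    ultimately show "locally_lipschitz_on S
        (\<lambda>x. (prod_right (f x) o\<^sub>L Dg x) + (prod_left (g x) o\<^sub>L Df x))"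
      using \<open>locally_lipschitz_on S Df\<close> \<open>locally_lipschitz_on S Dg\<close>
      by (intro locally_lipschitz_on_add
          bounded_bilinear.locally_lipschitz_on[OF bounded_bilinear_blinfun_compose])
  qed
qed

lemma C11_on_add:
  assumes f: "C11_on S f" and g: "C11_on S g"
  shows "C11_on S (\<lambda>x. f x + g x)"
proof -
  obtain Df where "\<And>x. x \<in> S \<Longrightarrow> (f has_derivative blinfun_apply (Df x)) (at x)"
    "locally_lipschitz_on S Df"
    using f unfolding C11_on_def by blast
  moreover obtain Dg where "\<And>x. x \<in> S \<Longrightarrow> (g has_derivative blinfun_apply (Dg x)) (at x)"
    "locally_lipschitz_on S Dg"
    using g unfolding C11_on_def by blast
  ultimately show ?thesis
    by (intro C11_onI[where D = "\<lambda>x. Df x + Dg x"] locally_lipschitz_on_add)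
      (auto simp: plus_blinfun.rep_eq intro: has_derivative_add)
qed

lemma C11_on_diff: "C11_on S f \<Longrightarrow> C11_on S g \<Longrightarrow> C11_on S (\<lambda>x. f x - g x)"
  using C11_on_add[OF _ C11_on_compose[OF C11_on_bounded_linear[OF open_UNIV
          bounded_linear_minus[OF bounded_linear_ident]]], of S f g]
  by simp

lemma C11_on_sum:
  "open S \<Longrightarrow> (\<And>i. i \<in> I \<Longrightarrow> C11_on S (f i)) \<Longrightarrow> C11_on S (\<lambda>x. \<Sum>i\<in>I. f i x)"
  by (induction I rule: infinite_finite_induct) (simp_all add: C11_on_const C11_on_add)

lemma C11_on_mult: "C11_on S f \<Longrightarrow> C11_on S g \<Longrightarrow> C11_on S (\<lambda>x. f x * g x :: real)"
  by (rule bounded_bilinear.C11_on[OF bounded_bilinear_mult])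

lemma C11_on_scaleR: "C11_on S f \<Longrightarrow> C11_on S g \<Longrightarrow> C11_on S (\<lambda>x. f x *\<^sub>R g x)"
  by (rule bounded_bilinear.C11_on[OF bounded_bilinear_scaleR])

lemma C11_on_inner: "C11_on S f \<Longrightarrow> C11_on S g \<Longrightarrow> C11_on S (\<lambda>x. f x \<bullet> g x)"
  by (rule bounded_bilinear.C11_on[OF bounded_bilinear_inner])

lemma C11_on_prod:
  "open S \<Longrightarrow> (\<And>i. i \<in> I \<Longrightarrow> C11_on S (f i)) \<Longrightarrow> C11_on S (\<lambda>x. \<Prod>i\<in>I. f i x :: real)"
  by (induction I rule: infinite_finite_induct) (simp_all add: C11_on_const C11_on_mult)

lemma C11_on_inverse: "C11_on {t::real. t \<noteq> 0} inverse"
proof (rule C11_onI[where D = "\<lambda>t. blinfun_mult_right (- (inverse t * inverse t))"])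
  show "(inverse has_derivative blinfun_apply (blinfun_mult_right (- (inverse t * inverse t))))
    (at t)" if "t \<in> {t. t \<noteq> 0}" for t :: real
    using DERIV_inverse[of t] that
    by (simp add: has_field_derivative_def power2_eq_square mult.commute)
  have "locally_lipschitz_on {t::real. t \<noteq> 0} (\<lambda>t. inverse t * inverse t)"
    by (rule bounded_bilinear.locally_lipschitz_on[OF bounded_bilinear_mult
          locally_lipschitz_on_inverse locally_lipschitz_on_inverse])
  then show "locally_lipschitz_on {t::real. t \<noteq> 0}
      (\<lambda>t. blinfun_mult_right (- (inverse t * inverse t)))"
    by (rule locally_lipschitz_on_compose[OF locally_lipschitz_on_bounded_linear[OF open_UNIV
          bounded_linear_compose[OF bounded_linear_blinfun_mult_right
            bounded_linear_minus[OF bounded_linear_ident]]]]) simp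
qed

lemma C11_on_norm: "C11_on {v::'a::real_inner. v \<noteq> 0} norm"
proof (rule C11_onI[where D = "\<lambda>v. blinfun_inner_left (sgn v)"])
  show "(norm has_derivative blinfun_apply (blinfun_inner_left (sgn v))) (at v)"
    if "v \<in> {v. v \<noteq> 0}" for v :: 'a
    using has_derivative_norm[of v] that by simp
  have op: "open {v::'a. v \<noteq> 0}" by (simp add: open_Collect_neq)
  have "locally_lipschitz_on {v::'a. v \<noteq> 0} (\<lambda>v. inverse (norm v))"
    by (rule locally_lipschitz_on_compose[OF locally_lipschitz_on_inverse
          locally_lipschitz_on_norm[OF op]]) auto
  then have "locally_lipschitz_on {v::'a. v \<noteq> 0} (\<lambda>v. inverse (norm v) *\<^sub>R v)"
    by (rule bounded_bilinear.locally_lipschitz_on[OF bounded_bilinear_scaleR _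
        locally_lipschitz_on_bounded_linear[OF op bounded_linear_ident]])
  moreover have "(\<lambda>v::'a. inverse (norm v) *\<^sub>R v) = sgn"
    by (simp add: fun_eq_iff sgn_div_norm divide_inverse_commute)
  ultimately have "locally_lipschitz_on {v::'a. v \<noteq> 0} sgn" by simp
  then show "locally_lipschitz_on {v::'a. v \<noteq> 0} (\<lambda>v. blinfun_inner_left (sgn v))"
    by (rule locally_lipschitz_on_compose[OF locally_lipschitz_on_bounded_linear[OF open_UNIV
          bounded_linear_blinfun_inner_left]]) simp
qed

lemma C11_on_sgn: "C11_on {v::'a::real_inner. v \<noteq> 0} sgn"
proof -
  have "C11_on {v::'a. v \<noteq> 0} (\<lambda>v. inverse (norm v) *\<^sub>R v)"
    by (intro C11_on_scaleR C11_on_compose[OF C11_on_inverse C11_on_norm] C11_on_id)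
      (auto simp: open_Collect_neq)
  then show ?thesis by (rule C11_on_cong) (simp add: sgn_div_norm divide_inverse_commute)
qed

section \<open>Vector- and matrix-valued \<open>C\<^sup>1\<^sup>,\<^sup>1\<close> maps\<close>

lemma bounded_linear_axis: "bounded_linear (axis i :: 'b::real_normed_vector \<Rightarrow> 'b^'k::finite)"
proof (rule bounded_linear_intro[where K = 1])
  fix x :: 'b
  have "norm (axis i x) \<le> (\<Sum>j\<in>UNIV. norm (axis i x $ j))"
    unfolding norm_vec_def by (rule L2_set_le_sum) simp
  also have "\<dots> = norm x" by (simp add: axis_def if_distrib cong: if_cong)
  finally show "norm (axis i x) \<le> norm x * 1" by simp
qed (simp_all add: axis_def vec_eq_iff)

lemma vec_eq_sum_axis: "(v::'b::real_normed_vector^'k::finite) = (\<Sum>i\<in>UNIV. axis i (v $ i))"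
  by (simp add: vec_eq_iff axis_def if_distrib cong: if_cong)

lemma C11_on_vec:
  fixes f :: "'a::real_normed_vector \<Rightarrow> 'b::real_normed_vector^'k::finite"
  assumes "open S" and "\<And>i. C11_on S (\<lambda>x. f x $ i)"
  shows "C11_on S f"
proof -
  have "C11_on S (\<lambda>x. \<Sum>i\<in>UNIV. axis i (f x $ i))"
    using assms
    by (intro C11_on_sum C11_on_compose[OF C11_on_bounded_linear[OF open_UNIV bounded_linear_axis]])
      auto
  then show ?thesis by (rule C11_on_cong) (simp flip: vec_eq_sum_axis)
qed

lemma C11_on_nth: "C11_on S f \<Longrightarrow> C11_on S (\<lambda>x. f x $ i)"
  by (rule C11_on_compose[OF C11_on_bounded_linear[OF open_UNIV bounded_linear_vec_nth]]) simp_all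

lemma C11_on_matrix_entry: "open S \<Longrightarrow> C11_on S (\<lambda>A. A $ i $ j)"
  by (intro C11_on_nth C11_on_id)

lemma C11_on_det: "C11_on UNIV (det :: real^'n::finite^'n \<Rightarrow> real)"
proof -
  have "C11_on UNIV (\<lambda>A::real^'n^'n.
      \<Sum>p\<in>{p. p permutes (UNIV::'n set)}. of_int (sign p) * (\<Prod>i\<in>UNIV. A $ i $ p i))"
    by (intro C11_on_sum C11_on_mult C11_on_const C11_on_prod C11_on_matrix_entry open_UNIV)
  then show ?thesis by (rule C11_on_cong) (simp add: det_def)
qed

lemma C11_on_matrix_matrix_mult:
  fixes f :: "'a::real_normed_vector \<Rightarrow> real^'n::finite^'m::finite"
    and g :: "'a \<Rightarrow> real^'p::finite^'n"
  assumes f: "C11_on S f" and g: "C11_on S g"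
  shows "C11_on S (\<lambda>x. f x ** g x)"
proof -
  have S: "open S" using f by (rule C11_on_imp_open)
  have "C11_on S (\<lambda>x. \<Sum>k\<in>UNIV. f x $ i $ k * g x $ k $ j)" for i j
    by (intro C11_on_sum C11_on_mult C11_on_nth f g S)
  then show ?thesis
    by (intro C11_on_vec S) (simp add: matrix_matrix_mult_def)
qed

lemma matrix_inv_right: "invertible (A::real^'n::finite^'n) \<Longrightarrow> A ** matrix_inv A = mat 1"
  unfolding invertible_def matrix_inv_def by (rule someI2_ex) auto

lemma matrix_inv_entry:
  fixes A :: "real^'n::finite^'n"
  assumes "invertible A"
  shows "matrix_inv A $ k $ j = det (\<chi> i l. if l = k then axis j 1 $ i else A $ i $ l) / det A"
proof -
  have "det A \<noteq> 0" using assms invertible_det_nz by blast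
  moreover have "A *v (matrix_inv A *v axis j 1) = axis j 1"
    by (simp add: matrix_vector_mul_assoc matrix_inv_right[OF assms])
  ultimately have "matrix_inv A *v axis j 1
      = (\<chi> k. det (\<chi> i l. if l = k then axis j 1 $ i else A $ i $ l) / det A)"
    using cramer by blast
  then show ?thesis by (simp add: matrix_vector_mult_basis column_def vec_eq_iff)
qed

lemma open_invertible: "open {A::real^'n::finite^'n. invertible A}"
proof -
  have "open (det -` (- {0::real}) :: (real^'n^'n) set)"
    by (rule open_vimage[OF open_Compl[OF closed_singleton]
          C11_on_imp_continuous_on[OF C11_on_det]])
  then show ?thesis by (simp add: invertible_det_nz vimage_def)
qed

lemma C11_on_matrix_inv: "C11_on {A::real^'n::finite^'n. invertible A} matrix_inv"
proof -
  let ?S = "{A::real^'n^'n. invertible A}"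
  note S = open_invertible
  have "C11_on ?S (\<lambda>A::real^'n^'n. inverse (det A))"
    by (rule C11_on_compose[OF C11_on_inverse C11_on_subset[OF C11_on_det S]])
      (auto simp: invertible_det_nz)
  moreover have "C11_on ?S (\<lambda>A::real^'n^'n. det (\<chi> i l. if l = k then axis j 1 $ i else A $ i $ l))"
    for k j
  proof -
    have "C11_on ?S (\<lambda>A::real^'n^'n. if l = k then axis j 1 $ i else A $ i $ l)" for i l
      by (cases "l = k") (simp_all add: C11_on_const C11_on_matrix_entry S)
    then show ?thesis
      by (intro C11_on_compose[OF C11_on_det, of ?S, simplified] C11_on_vec S) simp
  qed
  ultimately have "C11_on ?S (\<lambda>A.
      \<chi> k j. det (\<chi> i l. if l = k then axis j 1 $ i else A $ i $ l) * inverse (det A))"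
    by (intro C11_on_vec S) (simp add: C11_on_mult)
  then show ?thesis
    by (rule C11_on_cong) (simp add: vec_eq_iff matrix_inv_entry divide_inverse)
qed

section \<open>Pointwise regularity classes\<close>

lemma Dop_eqI: "(f has_derivative blinfun_apply B) (at x) \<Longrightarrow> Dop f x = B"
  unfolding Dop_def by (metis frechet_derivative_at blinfun_apply_inverse)

lemma has_derivative_Dop:
  assumes "f differentiable (at x)"
  shows "(f has_derivative blinfun_apply (Dop f x)) (at x)"
proof -
  have "(f has_derivative frechet_derivative f (at x)) (at x)"
    using assms by (rule frechet_derivative_works[THEN iffD1])
  then show ?thesis
    unfolding Dop_def by (simp add: bounded_linear_Blinfun_apply has_derivative_bounded_linear)
qed

lemma reg_at_Reg1_iff:
  "reg_at Reg1 f y \<longleftrightarrow>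
     (\<exists>r>0. \<exists>D. (\<forall>x\<in>ball y r. (f has_derivative blinfun_apply (D x)) (at x)) \<and> isCont D y)"
proof
  assume "reg_at Reg1 f y"
  then show "\<exists>r>0. \<exists>D. (\<forall>x\<in>ball y r. (f has_derivative blinfun_apply (D x)) (at x)) \<and> isCont D y"
    by (auto intro: has_derivative_Dop)
next
  assume "\<exists>r>0. \<exists>D. (\<forall>x\<in>ball y r. (f has_derivative blinfun_apply (D x)) (at x)) \<and> isCont D y"
  then obtain r D where r: "r > 0"
    and D: "\<And>x. x \<in> ball y r \<Longrightarrow> (f has_derivative blinfun_apply (D x)) (at x)"
    and "isCont D y"
    by blast
  have "eventually (\<lambda>x. Dop f x = D x) (nhds y)"
    unfolding eventually_nhds using r by (intro exI[of _ "ball y r"]) (auto intro: Dop_eqI D)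
  then have "isCont (Dop f) y" using \<open>isCont D y\<close> isCont_cong by blast
  moreover have "\<forall>x\<in>ball y r. f differentiable (at x)"
    using D unfolding differentiable_def by blast
  ultimately show "reg_at Reg1 f y" using r by auto
qed

lemma reg_at_imp_isCont: "reg_at b g y \<Longrightarrow> isCont g y"
proof (cases b)
  case RegLp
  assume "reg_at b g y"
  then obtain r L where r: "r > 0"
    and L: "\<And>x. norm (x - y) \<le> r \<Longrightarrow> norm (g x - g y) \<le> L * norm (x - y)"
    using RegLp by auto
  have "eventually (\<lambda>x. norm (g x - g y) \<le> L * norm (x - y)) (at y)"
    using r L by (auto simp: eventually_at dist_norm intro!: exI[of _ r])
  moreover have "((\<lambda>x. L * norm (x - y)) \<longlongrightarrow> 0) (at y)"
    by (auto intro!: tendsto_eq_intros)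
  ultimately have "((\<lambda>x. g x - g y) \<longlongrightarrow> 0) (at y)"
    by (rule Lim_null_comparison)
  then show "isCont g y" by (simp add: isCont_def LIM_zero_iff)
next
  case RegL
  assume "reg_at b g y"
  then obtain r L where "r > 0" "L-lipschitz_on (cball y r) g" using RegL by auto
  then have "continuous_on (ball y r) g"
    by (meson ball_subset_cball lipschitz_on_continuous_on lipschitz_on_subset)
  then show "isCont g y" by (rule continuous_on_interior) (simp add: \<open>r > 0\<close>)
qed (auto simp: differentiable_imp_continuous_within)

lemma reg_at_RegLp_cong:
  assumes "reg_at RegLp f y" "e > 0" "\<And>x. x \<in> ball y e \<Longrightarrow> f x = h x"
  shows "reg_at RegLp h y"
proof -
  obtain s L where s: "s > 0" "L \<ge> 0"
    and L: "\<And>x. norm (x - y) \<le> s \<Longrightarrow> norm (f x - f y) \<le> L * norm (x - y)"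
    using assms(1) by auto
  have "norm (h x - h y) \<le> L * norm (x - y)" if "norm (x - y) \<le> min s (e/2)" for x
    using L[of x] assms(2) assms(3)[of x] assms(3)[of y] that
    by (simp add: dist_norm norm_minus_commute)
  then show ?thesis
    unfolding reg_at.simps using s assms(2) by (intro exI[of _ "min s (e/2)"]) auto
qed

lemma reg_at_RegLp_compose:
  assumes \<Psi>: "locally_lipschitz_on S \<Psi>" and g: "reg_at RegLp g y" and "g y \<in> S"
  shows "reg_at RegLp (\<lambda>x. \<Psi> (g x)) y"
proof -
  obtain r1 L1 where r1: "r1 > 0" "L1-lipschitz_on (ball (g y) r1) \<Psi>"
    using \<Psi> \<open>g y \<in> S\<close> by (blast elim: locally_lipschitz_onE)
  obtain d where d: "d > 0" "g ` ball y d \<subseteq> ball (g y) r1"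
    using reg_at_imp_isCont[OF g] r1(1) continuous_at_ball by blast
  obtain r L where r: "r > 0" "L \<ge> 0"
    and L: "\<And>x. norm (x - y) \<le> r \<Longrightarrow> norm (g x - g y) \<le> L * norm (x - y)"
    using g by auto
  have "norm (\<Psi> (g x) - \<Psi> (g y)) \<le> (L1 * L) * norm (x - y)"
    if x: "norm (x - y) \<le> min r (d/2)" for x
  proof -
    have "x \<in> ball y d" using x d(1) by (simp add: dist_norm norm_minus_commute)
    then have "g x \<in> ball (g y) r1" using d(2) by blast
    then have "norm (\<Psi> (g x) - \<Psi> (g y)) \<le> L1 * norm (g x - g y)"
      using lipschitz_onD[OF r1(2), of "g x" "g y"] r1(1) by (simp add: dist_norm)
    also have "\<dots> \<le> L1 * (L * norm (x - y))"
      using L[of x] x lipschitz_on_nonneg[OF r1(2)] by (simp add: mult_left_mono)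
    finally show ?thesis by simp
  qed
  then show ?thesis
    unfolding reg_at.simps using r d(1) lipschitz_on_nonneg[OF r1(2)]
    by (intro exI[of _ "min r (d/2)"]) (auto intro!: exI[of _ "L1 * L"])
qed

lemma (in bounded_bilinear) reg_at_RegLp:
  assumes f: "reg_at RegLp f y" and g: "reg_at RegLp g y"
  shows "reg_at RegLp (\<lambda>x. prod (f x) (g x)) y"
proof -
  obtain r1 L1 where r1: "r1 > 0" "L1 \<ge> 0"
    and L1: "\<And>x. norm (x - y) \<le> r1 \<Longrightarrow> norm (f x - f y) \<le> L1 * norm (x - y)"
    using f by auto
  obtain r2 L2 where r2: "r2 > 0" "L2 \<ge> 0"
    and L2: "\<And>x. norm (x - y) \<le> r2 \<Longrightarrow> norm (g x - g y) \<le> L2 * norm (x - y)"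
    using g by auto
  obtain K where K: "K > 0" "\<And>a b. norm (prod a b) \<le> norm a * norm b * K"
    using pos_bounded by blast
  define r where "r = min r1 r2"
  define B where "B = norm (g y) + L2 * r"
  have "norm (prod (f x) (g x) - prod (f y) (g y))
      \<le> (K * (L1 * B + norm (f y) * L2)) * norm (x - y)" if x: "norm (x - y) \<le> r" for x
  proof -
    have f': "norm (f x - f y) \<le> L1 * norm (x - y)" and g': "norm (g x - g y) \<le> L2 * norm (x - y)"
      using L1[of x] L2[of x] x by (simp_all add: r_def)
    have "norm (g x) \<le> B"
      using g' norm_triangle_ineq2[of "g x" "g y"] mult_left_mono[OF x r2(2)] by (simp add: B_def)
    have "norm (prod (f x) (g x) - prod (f y) (g y))
        = norm (prod (f x - f y) (g x) + prod (f y) (g x - g y))"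
      by (simp add: diff_left diff_right)
    also have "\<dots> \<le> norm (f x - f y) * norm (g x) * K + norm (f y) * norm (g x - g y) * K"
      by (intro order_trans[OF norm_triangle_ineq] add_mono K(2))
    also have "\<dots> \<le> (L1 * norm (x - y)) * B * K + norm (f y) * (L2 * norm (x - y)) * K"
      using f' g' \<open>norm (g x) \<le> B\<close> K(1) r1(2)
      by (intro add_mono mult_right_mono mult_mono) auto
    finally show ?thesis by (simp add: algebra_simps)
  qed
  moreover have "0 \<le> K * (L1 * B + norm (f y) * L2)"
    using K(1) r1 r2 by (simp add: B_def r_def)
  ultimately show ?thesis
    unfolding reg_at.simps using r1(1) r2(1)
    by (intro exI[of _ r]) (auto simp: r_def intro!: exI[of _ "K * (L1 * B + norm (f y) * L2)"])
qed

lemma reg_at_Reg1_imp_RegLp: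
  assumes "reg_at Reg1 g y" shows "reg_at RegLp g y"
proof -
  obtain r where r: "r > 0" "\<And>x. x \<in> ball y r \<Longrightarrow> g differentiable (at x)" and "isCont (Dop g) y"
    using assms by auto
  then obtain e where e: "e > 0" "Dop g ` ball y e \<subseteq> ball (Dop g y) 1"
    unfolding continuous_at_ball using zero_less_one by blast
  define s where "s = min r e / 2"
  define B where "B = norm (Dop g y) + 1"
  have "norm (g x - g y) \<le> B * norm (x - y)" if x: "norm (x - y) \<le> s" for x
  proof (rule differentiable_bound[of "cball y s"])
    show "(g has_derivative blinfun_apply (Dop g z)) (at z within cball y s)"
      if "z \<in> cball y s" for z
    proof -
      have "z \<in> ball y r" using that r(1) e(1) by (simp add: s_def)
      then show ?thesis by (rule has_derivative_at_withinI[OF has_derivative_Dop[OF r(2)]])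
    qed
    show "onorm (blinfun_apply (Dop g z)) \<le> B" if "z \<in> cball y s" for z
    proof -
      have "Dop g z \<in> ball (Dop g y) 1"
        using that r(1) e by (intro subsetD[OF e(2)]) (auto simp: s_def)
      then have "norm (Dop g z) \<le> B"
        using norm_triangle_ineq2[of "Dop g z" "Dop g y"]
        by (simp add: B_def dist_norm norm_minus_commute)
      then show ?thesis by (simp add: norm_blinfun.rep_eq)
    qed
  qed (use x r(1) e(1) in \<open>auto simp: s_def dist_norm norm_minus_commute\<close>)
  then show ?thesis
    unfolding reg_at.simps using r(1) e(1)
    by (intro exI[of _ s]) (auto simp: s_def B_def intro!: exI[of _ B])
qed

lemma reg_at_RegL_compose:
  assumes \<Psi>: "locally_lipschitz_on S \<Psi>" and g: "reg_at RegL g y" and "g y \<in> S"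
  shows "reg_at RegL (\<lambda>x. \<Psi> (g x)) y"
proof -
  obtain r1 L1 where r1: "r1 > 0" "L1-lipschitz_on (ball (g y) r1) \<Psi>"
    using \<Psi> \<open>g y \<in> S\<close> by (blast elim: locally_lipschitz_onE)
  obtain d where d: "d > 0" "g ` ball y d \<subseteq> ball (g y) r1"
    using reg_at_imp_isCont[OF g] r1(1) continuous_at_ball by blast
  obtain r L where r: "r > 0" "L-lipschitz_on (cball y r) g" using g by auto
  have "L-lipschitz_on (cball y (min r (d/2))) g" by (rule lipschitz_on_subset[OF r(2)]) auto
  moreover have "g ` cball y (min r (d/2)) \<subseteq> ball (g y) r1" using d by force
  then have "L1-lipschitz_on (g ` cball y (min r (d/2))) \<Psi>"
    by (rule lipschitz_on_subset[OF r1(2)])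
  ultimately have "(L1 * L)-lipschitz_on (cball y (min r (d/2))) (\<lambda>x. \<Psi> (g x))"
    by (rule lipschitz_on_compose2)
  moreover have "min r (d/2) > 0" using r d by simp
  ultimately show ?thesis unfolding reg_at.simps by blast
qed

lemma reg_at_Reg1_compose:
  assumes \<Psi>: "C11_on S \<Psi>" and g: "reg_at Reg1 g y" and "g y \<in> S"
  shows "reg_at Reg1 (\<lambda>x. \<Psi> (g x)) y"
proof -
  obtain D where D: "\<And>z. z \<in> S \<Longrightarrow> (\<Psi> has_derivative blinfun_apply (D z)) (at z)"
    and D_lip: "locally_lipschitz_on S D"
    using \<Psi> unfolding C11_on_def by blast
  obtain r Dg where r: "r > 0"
    and Dg: "\<And>x. x \<in> ball y r \<Longrightarrow> (g has_derivative blinfun_apply (Dg x)) (at x)"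
    and "isCont Dg y"
    using g reg_at_Reg1_iff by blast
  obtain e where e: "e > 0" "ball (g y) e \<subseteq> S"
    using C11_on_imp_open[OF \<Psi>] \<open>g y \<in> S\<close> open_contains_ball by blast
  have "isCont g y" using g by (rule reg_at_imp_isCont)
  then obtain d where d: "d > 0" "g ` ball y d \<subseteq> ball (g y) e"
    using e(1) continuous_at_ball by blast
  have "((\<lambda>x. \<Psi> (g x)) has_derivative blinfun_apply (D (g x) o\<^sub>L Dg x)) (at x)"
    if "x \<in> ball y (min r d)" for x
  proof -
    have "g x \<in> S" using that d(2) e(2) by fastforce
    then show ?thesis
      using diff_chain_at[OF Dg D, of x] that by (simp add: o_def blinfun_compose.rep_eq)
  qed
  moreover have "isCont D (g y)"
    using locally_lipschitz_on_imp_continuous_on[OF D_lip] C11_on_imp_open[OF \<Psi>] \<open>g y \<in> S\<close>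
    by (simp add: continuous_on_eq_continuous_at)
  then have "isCont (\<lambda>x. D (g x) o\<^sub>L Dg x) y"
    using bounded_bilinear.isCont[OF bounded_bilinear_blinfun_compose
        isCont_o2[OF \<open>isCont g y\<close>] \<open>isCont Dg y\<close>] by blast
  ultimately show ?thesis
    unfolding reg_at_Reg1_iff using r d(1)
    by (intro exI[of _ "min r d"] conjI exI[of _ "\<lambda>x. D (g x) o\<^sub>L Dg x"]) auto
qed

lemma reg_at_compose:
  assumes \<Psi>: "C11_on S \<Psi>" and g: "reg_at b g y" and "g y \<in> S"
  shows "reg_at b (\<lambda>x. \<Psi> (g x)) y"
proof (cases b)
  case Reg0
  have "isCont \<Psi> (g y)"
    using C11_on_imp_continuous_on[OF \<Psi>] C11_on_imp_open[OF \<Psi>] \<open>g y \<in> S\<close>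
    by (simp add: continuous_on_eq_continuous_at)
  then show ?thesis using g Reg0 by (simp add: isCont_o2)
next
  case Reg1p
  obtain D where "(\<Psi> has_derivative D) (at (g y))"
    using \<Psi> \<open>g y \<in> S\<close> unfolding C11_on_def by blast
  then show ?thesis
    using g Reg1p differentiable_chain_at[of g y \<Psi>] by (auto simp: differentiable_def o_def)
next
  case RegLp
  then show ?thesis
    using reg_at_RegLp_compose[OF C11_on_imp_locally_lipschitz_on[OF \<Psi>]] g \<open>g y \<in> S\<close> by simp
next
  case RegL
  then show ?thesis
    using reg_at_RegL_compose[OF C11_on_imp_locally_lipschitz_on[OF \<Psi>]] g \<open>g y \<in> S\<close> by simp
next
  case Reg1
  then show ?thesis using reg_at_Reg1_compose[OF \<Psi>] g \<open>g y \<in> S\<close> by simp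
qed

lemma reg_at_Reg1_Pair:
  fixes f :: "'a::real_normed_vector \<Rightarrow> 'b::real_normed_vector"
    and g :: "'a \<Rightarrow> 'c::real_normed_vector"
  assumes f: "reg_at Reg1 f y" and g: "reg_at Reg1 g y"
  shows "reg_at Reg1 (\<lambda>x. (f x, g x)) y"
proof -
  obtain r1 Df where r1: "r1 > 0"
    and Df: "\<And>x. x \<in> ball y r1 \<Longrightarrow> (f has_derivative blinfun_apply (Df x)) (at x)"
    and "isCont Df y"
    using f reg_at_Reg1_iff by blast
  obtain r2 Dg where r2: "r2 > 0"
    and Dg: "\<And>x. x \<in> ball y r2 \<Longrightarrow> (g has_derivative blinfun_apply (Dg x)) (at x)"
    and "isCont Dg y"
    using g reg_at_Reg1_iff by blast
  define inl :: "'b \<Rightarrow>\<^sub>L ('b \<times> 'c)" where "inl = Blinfun (\<lambda>u. (u, 0))"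
  define inr :: "'c \<Rightarrow>\<^sub>L ('b \<times> 'c)" where "inr = Blinfun (\<lambda>v. (0, v))"
  have inl: "blinfun_apply inl = (\<lambda>u. (u, 0))" and inr: "blinfun_apply inr = (\<lambda>v. (0, v))"
    unfolding inl_def inr_def
    by (auto intro!: bounded_linear_Blinfun_apply bounded_linear_Pair bounded_linear_zero
        bounded_linear_ident)
  have "((\<lambda>x. (f x, g x)) has_derivative blinfun_apply ((inl o\<^sub>L Df x) + (inr o\<^sub>L Dg x))) (at x)"
    if "x \<in> ball y (min r1 r2)" for x
    using has_derivative_Pair[OF Df Dg, of x] that
    by (simp add: plus_blinfun.rep_eq blinfun_compose.rep_eq inl inr)
  moreover have "isCont (\<lambda>x. (inl o\<^sub>L Df x) + (inr o\<^sub>L Dg x)) y"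
    using \<open>isCont Df y\<close> \<open>isCont Dg y\<close>
    by (intro isCont_add bounded_bilinear.isCont[OF bounded_bilinear_blinfun_compose]) auto
  ultimately show ?thesis
    unfolding reg_at_Reg1_iff using r1 r2
    by (intro exI[of _ "min r1 r2"] conjI exI[of _ "\<lambda>x. (inl o\<^sub>L Df x) + (inr o\<^sub>L Dg x)"]) auto
qed

lemma reg_at_Pair:
  fixes f :: "'a::real_normed_vector \<Rightarrow> 'b::real_normed_vector"
    and g :: "'a \<Rightarrow> 'c::real_normed_vector"
  assumes f: "reg_at b f y" and g: "reg_at b g y"
  shows "reg_at b (\<lambda>x. (f x, g x)) y"
proof (cases b)
  case RegLp
  obtain r1 L1 where r1: "r1 > 0" "L1 \<ge> 0"
    "\<And>x. norm (x - y) \<le> r1 \<Longrightarrow> norm (f x - f y) \<le> L1 * norm (x - y)"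
    using f RegLp by auto
  obtain r2 L2 where r2: "r2 > 0" "L2 \<ge> 0"
    "\<And>x. norm (x - y) \<le> r2 \<Longrightarrow> norm (g x - g y) \<le> L2 * norm (x - y)"
    using g RegLp by auto
  have "norm ((f x, g x) - (f y, g y)) \<le> (L1 + L2) * norm (x - y)"
    if "norm (x - y) \<le> min r1 r2" for x
    using norm_Pair_le[of "f x - f y" "g x - g y"] r1(3)[of x] r2(3)[of x] that
    by (simp add: algebra_simps)
  then show ?thesis
    unfolding RegLp reg_at.simps using r1 r2
    by (intro exI[of _ "min r1 r2"]) (auto intro!: exI[of _ "L1 + L2"])
next
  case RegL
  obtain r1 L1 where r1: "r1 > 0" "L1-lipschitz_on (cball y r1) f" using f RegL by auto
  obtain r2 L2 where r2: "r2 > 0" "L2-lipschitz_on (cball y r2) g" using g RegL by auto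
  have "(sqrt (L1\<^sup>2 + L2\<^sup>2))-lipschitz_on (cball y (min r1 r2)) (\<lambda>x. (f x, g x))"
    by (intro lipschitz_on_Pair lipschitz_on_subset[OF r1(2)] lipschitz_on_subset[OF r2(2)]) auto
  moreover have "min r1 r2 > 0" using r1 r2 by simp
  ultimately show ?thesis unfolding RegL reg_at.simps by blast
next
  case Reg1
  then show ?thesis using f g reg_at_Reg1_Pair by simp
qed (use f g in \<open>auto simp: differentiable_def intro: has_derivative_Pair\<close>)

lemma C11_on_Jmat_formula:
  "C11_on (UNIV \<times> {N. invertible N})
     (\<lambda>p. Fq (fst p :: (('n::finite) state)^('m::{finite,linorder}))
        ** matrix_inv (snd p :: real^('n::finite)^('n::finite)))"
proof -
  let ?S = "UNIV \<times> {N. invertible N}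
    :: (((('n::finite) state)^('m::{finite,linorder})) \<times> (real^('n::finite)^('n::finite))) set"
  have S: "open ?S" by (intro open_Times open_UNIV open_invertible)
  have "C11_on ?S (\<lambda>p. snd (fst p $ i))" for i
    by (rule C11_on_compose[OF C11_on_bounded_linear[OF open_UNIV bounded_linear_snd]
          C11_on_nth[OF C11_on_bounded_linear[OF S bounded_linear_fst]]]) simp
  then have "C11_on ?S (\<lambda>p. Fq (fst p))"
    by (intro C11_on_vec S) (simp add: Fq_def C11_on_nth)
  moreover have "C11_on ?S (\<lambda>p. matrix_inv (snd p))"
    by (rule C11_on_compose[OF C11_on_matrix_inv C11_on_bounded_linear[OF S bounded_linear_snd]])
      auto
  ultimately show ?thesis by (rule C11_on_matrix_matrix_mult)
qed

lemma reg_at_Jmat: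
  assumes "kinematic_system ms F R r" and "reg_system b F R r"
  shows "reg_at b (Jmat F R) y"
proof -
  have "reg_at b F y" "reg_at b R y" and "invertible (R y)"
    using assms unfolding kinematic_system_def reg_system_def reg_on_def by blast+
  then have "reg_at b (\<lambda>x. Fq (fst (F x, R x)) ** matrix_inv (snd (F x, R x))) y"
    by (intro reg_at_compose[OF C11_on_Jmat_formula] reg_at_Pair) auto
  then show ?thesis by (simp add: Jmat_def[abs_def])
qed

definition gs_next :: "('a::real_inner) list \<Rightarrow> 'a \<Rightarrow> 'a" where
  "gs_next hs j = (let v = j - (\<Sum>h\<leftarrow>filter (\<lambda>h. h \<noteq> 0) hs. (h \<bullet> j) *\<^sub>R h)
      in if norm v > 0 then (1 / norm v) *\<^sub>R v else 0)"

lemma gs_hats_Nil: "gs_hats [] = []"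
  by (simp add: gs_hats_def)

lemma gs_hats_snoc: "gs_hats (js @ [j]) = gs_hats js @ [gs_next (gs_hats js) j]"
  by (simp add: gs_hats_def gs_next_def)

lemma length_gs_hats: "length (gs_hats js) = length js"
  by (induction js rule: rev_induct) (simp_all add: gs_hats_snoc gs_hats_Nil)

lemma take_gs_hats: "take p (gs_hats js) = gs_hats (take p js)"
proof (induction js rule: rev_induct)
  case (snoc j js)
  then show ?case by (cases "p \<le> length js") (simp_all add: gs_hats_snoc length_gs_hats)
qed (simp add: gs_hats_Nil)

lemma nth_gs_hats:
  assumes "p < length js" shows "gs_hats js ! p = gs_next (gs_hats (take p js)) (js ! p)"
proof -
  have "gs_hats js ! p = take (Suc p) (gs_hats js) ! p" by simp
  also have "\<dots> = gs_hats (take p js @ [js ! p]) ! p"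
    by (simp only: take_gs_hats take_Suc_conv_app_nth[OF assms])
  finally show ?thesis using assms by (simp add: gs_hats_snoc nth_append length_gs_hats)
qed

lemma sum_list_map_filter_take:
  "p \<le> length xs \<Longrightarrow>
    sum_list (map f (filter P (take p xs))) = (\<Sum>q\<in>{q. q < p \<and> P (xs ! q)}. f (xs ! q))"
proof (induction p)
  case (Suc p)
  then have "p < length xs" by simp
  have "{q. q < Suc p \<and> P (xs ! q)} = (if P (xs ! p) then insert p else id) {q. q < p \<and> P (xs ! q)}"
    by (auto simp: less_Suc_eq)
  with Suc \<open>p < length xs\<close> show ?case
    by (simp add: take_Suc_conv_app_nth add.commute)
qed simp

lemma ex_least_finite_linorder:
  fixes P :: "'a::{finite,linorder} \<Rightarrow> bool"
  assumes "P x" shows "\<exists>a. P a \<and> (\<forall>k<a. \<not> P k)"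
proof -
  have fin: "finite {a. P a}" and ne: "{a. P a} \<noteq> {}" using assms by auto
  have "P (Min {a. P a})" using Min_in[OF fin ne] by simp
  moreover have "\<not> P k" if "k < Min {a. P a}" for k
    using leD[OF Min_le[OF fin, of k]] that by auto
  ultimately show ?thesis by blast
qed

abbreviation row_order :: "'m::{finite,linorder} list" where
  "row_order \<equiv> sorted_list_of_set UNIV"

lemma row_pos_row_order: "q < CARD('m::{finite,linorder}) \<Longrightarrow> row_pos (row_order ! q :: 'm) = q"
proof -
  assume q: "q < CARD('m)"
  have sorted: "sorted_wrt (<) (row_order :: 'm list)"
    and len: "length (row_order :: 'm list) = CARD('m)"
    by (simp_all add: strict_sorted_list_of_set)
  have "{k::'m::{finite,linorder}. k < row_order ! q} = (\<lambda>p. row_order ! p) ` {..<q}"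
  proof (intro equalityI subsetI)
    fix k :: "'m::{finite,linorder}" assume "k \<in> {k. k < row_order ! q}"
    moreover obtain p where p: "p < length (row_order :: 'm list)" "row_order ! p = k"
      using in_set_conv_nth[of k "row_order :: 'm list"] by auto
    ultimately have "p < q"
      using sorted_wrt_nth_less[OF sorted, of q p] q len
      by (metis linorder_neqE_nat mem_Collect_eq order.asym)
    then show "k \<in> (\<lambda>p. row_order ! p) ` {..<q}" using p by auto
  qed (use sorted_wrt_nth_less[OF sorted] q len in auto)
  moreover have "inj_on (\<lambda>p. row_order ! p :: 'm) {..<q}"
    using q len by (auto simp: inj_on_def nth_eq_iff_index_eq)
  ultimately show ?thesis unfolding row_pos_def by (simp add: card_image)
qed

lemma row_pos_less_card: "row_pos (i::'m::{finite,linorder}) < CARD('m)"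
  and row_order_row_pos: "row_order ! row_pos i = i"
proof -
  obtain q where q: "q < length (row_order :: 'm list)" "row_order ! q = i"
    using in_set_conv_nth[of i "row_order :: 'm list"] by auto
  then have "q < CARD('m)" by simp
  then have "row_pos i = q" using q(2) row_pos_row_order by blast
  then show "row_pos i < CARD('m)" "row_order ! row_pos i = i"
    using q \<open>q < CARD('m)\<close> by auto
qed

lemma row_pos_less_iff: "row_pos k < row_pos i \<longleftrightarrow> (k::'m::{finite,linorder}) < i"
proof -
  have "sorted_wrt (<) (row_order :: 'm list)" "length (row_order :: 'm list) = CARD('m)"
    by (simp_all add: strict_sorted_list_of_set)
  then show ?thesis
    by (metis linorder_neqE_nat order.asym sorted_wrt_nth_less row_pos_less_card row_order_row_pos)
qed

lemma inj_row_pos: "inj (row_pos :: 'm::{finite,linorder} \<Rightarrow> nat)"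
  by (metis injI row_order_row_pos)

lemma gs_hat_eq_sgn: "gs_hat M i = sgn (gs_v M i)"
proof -
  let ?H = "gs_hats (rows M)" and ?p = "row_pos i"
  have len: "length (rows M) = CARD('b)" "length ?H = CARD('b)"
    by (simp_all add: rows_def length_gs_hats)
  have p: "?p < length (rows M)" using row_pos_less_card len by simp
  have H_row_pos: "?H ! row_pos k = gs_hat M k" for k by (simp add: gs_hat_def)
  have "{q. q < ?p \<and> ?H ! q \<noteq> 0} = row_pos ` {k. k < i \<and> gs_hat M k \<noteq> 0}"
  proof (intro equalityI subsetI)
    fix q assume q: "q \<in> {q. q < ?p \<and> ?H ! q \<noteq> 0}"
    then have "row_pos (row_order ! q :: 'b) = q"
      using row_pos_less_card[of i] by (intro row_pos_row_order) simp
    then show "q \<in> row_pos ` {k. k < i \<and> gs_hat M k \<noteq> 0}"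
      using q row_pos_less_iff by (metis (mono_tags) H_row_pos image_eqI mem_Collect_eq)
  qed (auto simp: row_pos_less_iff H_row_pos)
  then have "sum_list (map (\<lambda>h. (h \<bullet> M $ i) *\<^sub>R h) (filter (\<lambda>h. h \<noteq> 0) (take ?p ?H)))
      = (\<Sum>k\<in>{k. k < i \<and> gs_hat M k \<noteq> 0}. (gs_hat M k \<bullet> M $ i) *\<^sub>R gs_hat M k)"
    using p len
    by (simp add: sum_list_map_filter_take sum.reindex inj_on_def inj_row_pos[THEN injD] H_row_pos)
  moreover have "rows M ! ?p = M $ i"
    using p len by (simp add: rows_def row_order_row_pos)
  ultimately show ?thesis
    unfolding gs_hat_def nth_gs_hats[OF p] take_gs_hats[symmetric] gs_next_def gs_v_def
    by (simp add: Let_def sgn_div_norm divide_inverse_commute)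
qed

lemma gs_c_scaleR_gs_hat: "gs_c M a a *\<^sub>R gs_hat M a = gs_v M a"
  by (cases "gs_v M a = 0") (simp_all add: gs_c_def gs_hat_eq_sgn sgn_div_norm)

section \<open>Smoothness of Gram--Schmidt away from vanishing pivots\<close>

definition gs_domain :: "'m::{finite,linorder} \<Rightarrow> (real^('n::finite)^('m::{finite,linorder})) set"
  where "gs_domain i = {M. \<forall>k<i. gs_v M k \<noteq> 0}"

lemma gs_v_on_gs_domain:
  assumes "M \<in> gs_domain i"
  shows "gs_v M i = M $ i - (\<Sum>k\<in>{k. k < i}. (gs_hat M k \<bullet> M $ i) *\<^sub>R gs_hat M k)"
proof -
  have "{k. k < i \<and> gs_hat M k \<noteq> 0} = {k. k < i}"
    using assms by (auto simp: gs_domain_def gs_hat_eq_sgn sgn_zero_iff)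
  then show ?thesis by (simp add: gs_v_def)
qed

lemma open_gs_domain_pivot_nonzero:
  assumes "C11_on (gs_domain k) (\<lambda>M::real^('n::finite)^('m::{finite,linorder}). gs_v M k)"
  shows "open (gs_domain k \<inter> (\<lambda>M::real^('n::finite)^('m::{finite,linorder}). gs_v M k) -` (- {0}))"
  by (rule continuous_open_preimage[OF C11_on_imp_continuous_on[OF assms]
        C11_on_imp_open[OF assms] open_Compl[OF closed_singleton]])

text \<open>Induction along the row order: on \<open>gs_domain i\<close> the earlier pivots are nonzero, so
  their normalisations \<open>gs_hat M k = sgn (gs_v M k)\<close> are \<open>C\<^sup>1\<^sup>,\<^sup>1\<close> there.\<close>
lemma C11_on_gs_v: "C11_on (gs_domain i) (\<lambda>M::real^('n::finite)^('m::{finite,linorder}). gs_v M i)"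
proof (induction "row_pos i" arbitrary: i rule: less_induct)
  case less
  have IH: "C11_on (gs_domain k) (\<lambda>M::real^('n::finite)^('m::{finite,linorder}). gs_v M k)"
    if "k < i" for k
    using less that by (simp add: row_pos_less_iff)
  have domain_eq: "gs_domain i = (\<Inter>k\<in>{k. k < i}.
      gs_domain k \<inter> (\<lambda>M::real^('n::finite)^('m::{finite,linorder}). gs_v M k) -` (- {0}))"
    unfolding gs_domain_def by (auto dest: less_trans)
  have S: "open (gs_domain i :: (real^('n::finite)^('m::{finite,linorder})) set)"
    unfolding domain_eq by (intro open_INT ballI) (auto intro: open_gs_domain_pivot_nonzero IH)
  have hat: "C11_on (gs_domain i) (\<lambda>M::real^('n::finite)^('m::{finite,linorder}). gs_hat M k)"
    if "k < i" for k
  proof -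
    have "gs_domain i \<subseteq> (gs_domain k :: (real^('n::finite)^('m::{finite,linorder})) set)"
      using that unfolding gs_domain_def by (auto dest: less_trans)
    then have "C11_on (gs_domain i) (\<lambda>M::real^('n::finite)^('m::{finite,linorder}). gs_v M k)"
      by (rule C11_on_subset[OF IH[OF that] S])
    moreover have "(\<lambda>M::real^('n::finite)^('m::{finite,linorder}). gs_v M k) ` gs_domain i
        \<subseteq> {v. v \<noteq> 0}"
      using that by (auto simp: gs_domain_def)
    ultimately show ?thesis
      unfolding gs_hat_eq_sgn by (rule C11_on_compose[OF C11_on_sgn])
  qed
  have row: "C11_on (gs_domain i) (\<lambda>M::real^('n::finite)^('m::{finite,linorder}). M $ i)"
    by (rule C11_on_nth[OF C11_on_id[OF S]])
  have "C11_on (gs_domain i)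
      (\<lambda>M::real^('n::finite)^('m::{finite,linorder}). (gs_hat M k \<bullet> M $ i) *\<^sub>R gs_hat M k)"
    if "k < i" for k
    by (rule C11_on_scaleR[OF C11_on_inner[OF hat[OF that] row] hat[OF that]])
  then have "C11_on (gs_domain i) (\<lambda>M::real^('n::finite)^('m::{finite,linorder}).
      M $ i - (\<Sum>k\<in>{k. k < i}. (gs_hat M k \<bullet> M $ i) *\<^sub>R gs_hat M k))"
    by (intro C11_on_diff[OF row] C11_on_sum[OF S]) simp
  then show ?case by (rule C11_on_cong) (simp add: gs_v_on_gs_domain)
qed

definition gs_full_rank :: "(real^('n::finite)^('m::{finite,linorder})) set"
  where "gs_full_rank = {M. \<forall>k. gs_v M k \<noteq> 0}"

lemma open_gs_full_rank: "open (gs_full_rank :: (real^('n::finite)^('m::{finite,linorder})) set)"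
proof -
  have full_rank_eq: "gs_full_rank
      = (\<Inter>k\<in>UNIV.
          gs_domain k \<inter> (\<lambda>M::real^('n::finite)^('m::{finite,linorder}). gs_v M k) -` (- {0}))"
    unfolding gs_full_rank_def gs_domain_def by auto
  show ?thesis
    unfolding full_rank_eq by (intro open_INT ballI open_gs_domain_pivot_nonzero C11_on_gs_v) simp
qed

lemma C11_on_gs_full_rank_gs_v:
  "C11_on gs_full_rank (\<lambda>M::real^('n::finite)^('m::{finite,linorder}). gs_v M k)"
  by (rule C11_on_subset[OF C11_on_gs_v open_gs_full_rank])
    (auto simp: gs_full_rank_def gs_domain_def)

lemma C11_on_gs_full_rank_gs_hat:
  "C11_on gs_full_rank (\<lambda>M::real^('n::finite)^('m::{finite,linorder}). gs_hat M k)"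
  unfolding gs_hat_eq_sgn
  by (rule C11_on_compose[OF C11_on_sgn C11_on_gs_full_rank_gs_v]) (auto simp: gs_full_rank_def)

lemma C11_on_gs_full_rank_gs_c:
  "C11_on gs_full_rank (\<lambda>M::real^('n::finite)^('m::{finite,linorder}). gs_c M i k)"
proof -
  consider "k = i" | "k < i" | "\<not> k \<le> i" by fastforce
  then show ?thesis
  proof cases
    case 1
    have "C11_on gs_full_rank (\<lambda>M::real^('n::finite)^('m::{finite,linorder}). norm (gs_v M i))"
      by (rule C11_on_compose[OF C11_on_norm C11_on_gs_full_rank_gs_v])
        (auto simp: gs_full_rank_def)
    then show ?thesis unfolding 1 by (rule C11_on_cong) (simp add: gs_c_def)
  next
    case 2
    show ?thesis
      by (rule C11_on_cong[OF C11_on_inner[OF C11_on_gs_full_rank_gs_hat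
            C11_on_nth[OF C11_on_id[OF open_gs_full_rank]]]])
        (use 2 in \<open>auto simp: gs_c_def gs_full_rank_def\<close>)
  next
    case 3
    show ?thesis
      by (rule C11_on_cong[OF C11_on_const[OF open_gs_full_rank, of 0]])
        (use 3 in \<open>auto simp: gs_c_def\<close>)
  qed
qed

lemma C11_on_gs_full_rank_block_mat:
  "C11_on gs_full_rank (\<lambda>M::real^('n::finite)^('m::{finite,linorder}). block_mat ms M a)"
proof (rule C11_on_vec[OF open_gs_full_rank])
  fix i
  show "C11_on gs_full_rank (\<lambda>M. block_mat ms M a $ i)"
  proof (cases "i \<in> task_block ms a")
    case True
    then show ?thesis
      by (simp add: block_mat_def)
        (intro C11_on_sum open_gs_full_rank
          C11_on_scaleR[OF C11_on_gs_full_rank_gs_c C11_on_gs_full_rank_gs_hat])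
  next
    case False
    then show ?thesis by (simp add: block_mat_def C11_on_const open_gs_full_rank)
  qed
qed

lemma interior_G_set_if_pivots_nonzero:
  assumes "kinematic_system ms F R r" and "reg_system b F R r"
    and "\<forall>a. gs_v (Jmat F R x0) a \<noteq> 0"
  shows "x0 \<in> interior (G_set b ms F R)"
proof -
  have "Jmat F R x0 \<in> gs_full_rank" using assms(3) by (simp add: gs_full_rank_def)
  then obtain e where e: "e > 0" "ball (Jmat F R x0) e \<subseteq> gs_full_rank"
    using open_gs_full_rank open_contains_ball by blast
  have "isCont (Jmat F R) x0" by (rule reg_at_imp_isCont[OF reg_at_Jmat[OF assms(1,2)]])
  then obtain d where d: "d > 0" "Jmat F R ` ball x0 d \<subseteq> ball (Jmat F R x0) e"
    using e(1) continuous_at_ball by blast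
  have "ball x0 d \<subseteq> G_set b ms F R"
  proof
    fix y assume "y \<in> ball x0 d"
    then have "Jmat F R y \<in> gs_full_rank" using d(2) e(2) by blast
    then show "y \<in> G_set b ms F R"
      unfolding G_set_def
      by (auto intro: reg_at_compose[OF C11_on_gs_full_rank_block_mat reg_at_Jmat[OF assms(1,2)]])
  qed
  then show ?thesis using d(1) by (meson centre_in_ball interior_maximal open_ball subsetD)
qed

section \<open>The quadratic estimate\<close>

lemma reg_at_RegLp_Dop_compose:
  assumes \<Psi>: "C11_on S \<Psi>" and g: "reg_at Reg1 g y" and Dg: "reg_at RegLp (Dop g) y"
    and "g y \<in> S"
  shows "reg_at RegLp (Dop (\<lambda>x. \<Psi> (g x))) y"
proof -
  obtain D where D: "\<And>z. z \<in> S \<Longrightarrow> (\<Psi> has_derivative blinfun_apply (D z)) (at z)"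
    and D_lip: "locally_lipschitz_on S D"
    using \<Psi> unfolding C11_on_def by blast
  obtain r where r: "r > 0" "\<And>x. x \<in> ball y r \<Longrightarrow> g differentiable (at x)"
    using g by auto
  obtain e where e: "e > 0" "ball (g y) e \<subseteq> S"
    using C11_on_imp_open[OF \<Psi>] \<open>g y \<in> S\<close> open_contains_ball by blast
  obtain d where d: "d > 0" "g ` ball y d \<subseteq> ball (g y) e"
    using reg_at_imp_isCont[OF g] e(1) continuous_at_ball by blast
  have "reg_at RegLp (\<lambda>x. D (g x)) y"
    by (rule reg_at_RegLp_compose[OF D_lip reg_at_Reg1_imp_RegLp[OF g] \<open>g y \<in> S\<close>])
  then have chain_Lp: "reg_at RegLp (\<lambda>x. D (g x) o\<^sub>L Dop g x) y"
    using Dg by (rule bounded_bilinear.reg_at_RegLp[OF bounded_bilinear_blinfun_compose])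
  have chain_rule: "D (g x) o\<^sub>L Dop g x = Dop (\<lambda>x. \<Psi> (g x)) x"
    if "x \<in> ball y (min r d)" for x
  proof -
    have "g x \<in> S" using that d(2) e(2) by fastforce
    then show ?thesis
      using diff_chain_at[OF has_derivative_Dop[OF r(2)] D, of x] that
      by (intro Dop_eqI[symmetric]) (simp add: o_def blinfun_compose.rep_eq)
  qed
  show ?thesis
    by (rule reg_at_RegLp_cong[of _ _ "min r d", OF chain_Lp _ chain_rule]) (use r(1) d(1) in simp)
qed

lemma linearization_error_quadratic:
  assumes f: "reg_at Reg1 f x0" and Df: "reg_at RegLp (Dop f) x0"
  shows "\<exists>\<rho>>0. \<exists>L>0. (\<forall>x\<in>cball x0 \<rho>. f differentiable (at x)) \<and>
    (\<forall>x\<in>cball x0 \<rho>. norm (f x - f x0 - Dop f x0 (x - x0)) \<le> L * (norm (x - x0))\<^sup>2)"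
proof -
  obtain r where r: "r > 0" "\<And>x. x \<in> ball x0 r \<Longrightarrow> f differentiable (at x)"
    using f by auto
  obtain s K where s: "s > 0" "K \<ge> 0"
    and K: "\<And>x. norm (x - x0) \<le> s \<Longrightarrow> norm (Dop f x - Dop f x0) \<le> K * norm (x - x0)"
    using Df by auto
  define \<rho> where "\<rho> = min s (r/2)"
  have diff: "f differentiable (at x)" if "x \<in> cball x0 \<rho>" for x
    using that r by (intro r(2)) (simp add: \<rho>_def)
  have "norm (f x - f x0 - Dop f x0 (x - x0)) \<le> (K + 1) * (norm (x - x0))\<^sup>2"
    if x: "x \<in> cball x0 \<rho>" for x
  proof -
    let ?S = "cball x0 (norm (x - x0))"
    have S: "?S \<subseteq> cball x0 \<rho>" using x by (auto simp: dist_norm norm_minus_commute)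
    have "norm (f x - f x0 - Dop f x0 (x - x0)) \<le> norm (x - x0) * (K * norm (x - x0))"
    proof (rule differentiable_bound_linearization[of x0 x ?S])
      show "x0 + t *\<^sub>R (x - x0) \<in> ?S" if "t \<in> {0..1}" for t
        using that by (auto simp: dist_norm mult_left_le_one_le)
      show "(f has_derivative blinfun_apply (Dop f u)) (at u within ?S)" if "u \<in> ?S" for u
        using that S by (blast intro: has_derivative_at_withinI[OF has_derivative_Dop[OF diff]])
      show "onorm (blinfun_apply (Dop f u) - blinfun_apply (Dop f x0)) \<le> K * norm (x - x0)"
        if "u \<in> ?S" for u
      proof -
        have u: "norm (u - x0) \<le> s" "norm (u - x0) \<le> norm (x - x0)"
          using that S by (auto simp: \<rho>_def dist_norm norm_minus_commute)
        have "onorm (blinfun_apply (Dop f u) - blinfun_apply (Dop f x0))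
            = norm (Dop f u - Dop f x0)"
          by (simp add: norm_blinfun.rep_eq minus_blinfun.rep_eq fun_diff_def)
        also have "\<dots> \<le> K * norm (u - x0)" using u(1) by (rule K)
        also have "\<dots> \<le> K * norm (x - x0)" using u(2) s(2) by (rule mult_left_mono)
        finally show ?thesis .
      qed
    qed simp
    also have "\<dots> = K * (norm (x - x0))\<^sup>2" by (simp add: power2_eq_square)
    also have "\<dots> \<le> (K + 1) * (norm (x - x0))\<^sup>2" by (intro mult_right_mono) simp_all
    finally show ?thesis .
  qed
  moreover have "\<rho> > 0" "K + 1 > 0" using r s by (simp_all add: \<rho>_def)
  ultimately show ?thesis using diff by blast
qed

theorem lemma15:
  fixes b :: regclass and ms :: "nat list"
    and F :: "('n::finite) state \<Rightarrow> ('n state)^('m::{finite,linorder})"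
    and R :: "'n state \<Rightarrow> real^'n^'n" and r :: "'n state \<Rightarrow> real^('m::{finite,linorder})"
    and x0 :: "'n state"
  assumes "kinematic_system ms F R r"
    and "reg_system b F R r"
    and "x0 \<notin> interior (G_set b ms F R)"
    and "reg_at Reg1 (Jmat F R) x0"
    and "reg_at RegLp (Dop (Jmat F R)) x0"
  shows "\<exists>(a::'m::{finite,linorder}) (\<rho>::real) (L::real). \<rho> > 0 \<and> L > 0 \<and>
     gs_c (Jmat F R x0) a a = 0 \<and>
     reg_on Reg1p (\<lambda>y. gs_c (Jmat F R y) a a *\<^sub>R gs_hat (Jmat F R y) a) (cball x0 \<rho>) \<and>
     (\<forall>x\<in>cball x0 \<rho>.
        norm (gs_c (Jmat F R x) a a *\<^sub>R gs_hat (Jmat F R x) a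
              - Dop (\<lambda>y. gs_c (Jmat F R y) a a *\<^sub>R gs_hat (Jmat F R y) a) x0 (x - x0))
        \<le> L * (norm (x - x0))\<^sup>2)"
proof -
  let ?J = "Jmat F R"
  have "\<exists>a. gs_v (?J x0) a = 0"
    using interior_G_set_if_pivots_nonzero[OF assms(1,2)] assms(3) by blast
  then obtain a where a: "gs_v (?J x0) a = 0"
    and before_a: "\<And>k. k < a \<Longrightarrow> gs_v (?J x0) k \<noteq> 0"
    using ex_least_finite_linorder[of "\<lambda>a. gs_v (?J x0) a = 0"] by blast
  define f where "f y = gs_v (?J y) a" for y
  have "?J x0 \<in> gs_domain a" using before_a by (simp add: gs_domain_def)
  then have "reg_at Reg1 f x0" "reg_at RegLp (Dop f) x0"
    unfolding f_def[abs_def]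
    by (rule reg_at_compose[OF C11_on_gs_v assms(4)]
        reg_at_RegLp_Dop_compose[OF C11_on_gs_v assms(4,5)])+
  then obtain \<rho> L where "\<rho> > 0" "L > 0" "\<forall>x\<in>cball x0 \<rho>. f differentiable (at x)"
    "\<forall>x\<in>cball x0 \<rho>. norm (f x - f x0 - Dop f x0 (x - x0)) \<le> L * (norm (x - x0))\<^sup>2"
    using linearization_error_quadratic by blast
  moreover have "(\<lambda>y. gs_c (?J y) a a *\<^sub>R gs_hat (?J y) a) = f"
    by (simp add: fun_eq_iff f_def gs_c_scaleR_gs_hat)
  moreover have "f x0 = 0" "gs_c (?J x0) a a = 0" using a by (simp_all add: f_def gs_c_def)
  ultimately show ?thesis unfolding reg_on_def by (intro exI[of _ a] exI[of _ \<rho>] exI[of _ L]) auto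
qed

end
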